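(* Let $u$ be a solution of the linear equation $\partial_tu=\Delta u$ on $[0,\infty)\times\mathbb{Z}$ with initial data $u_0\in\ell^\infty_+(\mathbb{Z})$. Then for every $k\in\mathbb{Z}$, $N\in\mathbb{N}$ and $t\ge0$, $$u(t,k)\ge M(u_0,k,N)\,e^{-2t}I_N(2t),\qquad M(u_0,k,N)=\sum_{l=-N}^Nu_0(k-l).$$
   Context: $\Delta v(k)=v(k-1)-2v(k)+v(k+1)$. A solution: $u\in C^0([0,\infty);\ell^\infty_+(\mathbb{Z}))$ with $u(0)=u_0$, each $u(\cdot,k)$ $C^1$ on $(0,\infty)$ satisfying the equation pointwise. $I_N$ is the modified Bessel function of the first kind of order $N$, $I_N(s)=\frac1\pi\int_0^\pi e^{s\cos\theta}\cos(N\theta)\,d\theta$. *)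

theory Defs
  imports "HOL-Analysis.Analysis"
begin

definition disc_lap :: "(int \<Rightarrow> real) \<Rightarrow> int \<Rightarrow> real" where
  "disc_lap v k = v (k - 1) - 2 * v k + v (k + 1)"

definition linf_pos :: "(int \<Rightarrow> real) set" where
  "linf_pos = {v. (\<forall>k. 0 \<le> v k) \<and> (\<exists>B. \<forall>k. \<bar>v k\<bar> \<le> B)}"

definition besselI :: "nat \<Rightarrow> real \<Rightarrow> real" where
  "besselI N s = (1 / pi) * integral {0..pi} (\<lambda>\<theta>. exp (s * cos \<theta>) * cos (real N * \<theta>))"

definition is_solution :: "(real \<Rightarrow> int \<Rightarrow> real) \<Rightarrow> (int \<Rightarrow> real) \<Rightarrow> bool" where
  "is_solution u u0 \<longleftrightarrow>
     (\<forall>t\<ge>0. u t \<in> linf_pos) \<and>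
     (\<forall>t0\<ge>0. \<forall>e>0. \<exists>d>0. \<forall>t\<ge>0. \<bar>t - t0\<bar> < d \<longrightarrow> (\<forall>k. \<bar>u t k - u t0 k\<bar> \<le> e)) \<and>
     u 0 = u0 \<and>
     (\<forall>k. (\<forall>t>0. ((\<lambda>s. u s k) has_real_derivative disc_lap (u t) k) (at t)) \<and>
          continuous_on {0<..} (deriv (\<lambda>s. u s k)))"

definition M_sum :: "(int \<Rightarrow> real) \<Rightarrow> int \<Rightarrow> nat \<Rightarrow> real" where
  "M_sum u0 k N = (\<Sum>l = - int N..int N. u0 (k - l))"

end

theory Submission imports Defs begin

text \<open>
  Let \<open>G n t = I\<^sub>n(2t)\<close> (\<open>bessel_kernel\<close>). Differentiating under the integral gives
  \<open>\<partial>\<^sub>t G n = G (n-1) + G (n+1)\<close>, and \<open>G n 0 = \<delta>\<^sub>n\<^sub>0\<close>, so \<open>e\<^sup>-\<^sup>2\<^sup>t G\<close> is the heat kernel of \<open>\<Delta>\<close>.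
  For a cooperative linear system (each derivative bounded below by a multiple of the worst
  component) nonnegativity propagates in time. Applied to \<open>e\<^sup>2\<^sup>t u(t, j) - \<Sum>\<^sub>m u\<^sub>0(m) G (j-m) t\<close>
  this shows that \<open>u\<close> dominates the heat flow of any finite part of \<open>u\<^sub>0\<close>; applied to
  \<open>e\<^sup>t(G n t - G (n+1) t)\<close> it shows that \<open>G n t\<close> decreases in \<open>|n|\<close>. Bounding the kernels
  over \<open>|l| \<le> N\<close> below by \<open>G N t\<close> gives the estimate.
\<close>

definition bessel_kernel :: "int \<Rightarrow> real \<Rightarrow> real" where
  "bessel_kernel n t = (1/pi) * integral {0..pi} (\<lambda>\<theta>. exp (2*t*cos \<theta>) * cos (of_int n * \<theta>))"

lemma besselI_eq_bessel_kernel: "besselI N (2*t) = bessel_kernel (int N) t"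
  by (simp add: besselI_def bessel_kernel_def)

lemma bessel_kernel_minus [simp]: "bessel_kernel (-n) t = bessel_kernel n t"
  by (simp add: bessel_kernel_def)

lemma bessel_kernel_has_real_derivative:
  "(bessel_kernel n has_real_derivative bessel_kernel (n-1) t + bessel_kernel (n+1) t) (at t)"
proof -
  let ?g = "\<lambda>m x \<theta>. exp (2*x*cos \<theta>) * cos (of_int m * \<theta>)"
  have leibniz: "((\<lambda>x. integral (cbox 0 pi) (?g n x)) has_real_derivative
      integral (cbox 0 pi) (\<lambda>\<theta>. 2*cos \<theta> * ?g n t \<theta>)) (at t)"
    by (rule leibniz_rule_field_derivative)
       (auto intro!: derivative_eq_intros integrable_continuous_interval continuous_intros simp: split_beta)
  have "2*cos \<theta> * ?g n t \<theta> = ?g (n-1) t \<theta> + ?g (n+1) t \<theta>" for \<theta>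
  proof -
    have "cos (of_int (n-1) * \<theta>) + cos (of_int (n+1) * \<theta>) = 2 * cos \<theta> * cos (of_int n * \<theta>)"
      by (simp add: algebra_simps cos_add cos_diff)
    then show ?thesis by (metis distrib_left mult.commute mult.left_commute)
  qed
  then have "integral {0..pi} (\<lambda>\<theta>. 2*cos \<theta> * ?g n t \<theta>)
      = integral {0..pi} (?g (n-1) t) + integral {0..pi} (?g (n+1) t)"
    by (simp only:) (rule integral_add; intro integrable_continuous_interval continuous_intros)
  with DERIV_cmult[OF leibniz, of "1/pi"] show ?thesis
    unfolding bessel_kernel_def [abs_def] by (simp add: distrib_left)
qed

lemma continuous_on_bessel_kernel: "continuous_on S (bessel_kernel n)"
  by (metis DERIV_isCont bessel_kernel_has_real_derivative continuous_at_imp_continuous_on)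

lemma bessel_kernel_at_0: "bessel_kernel n 0 = (if n = 0 then 1 else 0)"
proof (cases "n = 0")
  case False
  have "((\<lambda>x. sin (of_int n * x) / of_int n) has_real_derivative cos (of_int n * x))
      (at x within {0..pi})" for x
    using False by (auto intro!: derivative_eq_intros)
  then have "((\<lambda>x. cos (of_int n * x)) has_integral
      sin (of_int n * pi) / of_int n - sin (of_int n * 0) / of_int n) {0..pi}"
    by (intro fundamental_theorem_of_calculus) (auto simp: has_real_derivative_iff_has_vector_derivative)
  then show ?thesis
    using False by (simp add: bessel_kernel_def integral_unique mult.commute)
qed (simp add: bessel_kernel_def)

lemma abs_bessel_kernel_le:
  assumes "0 \<le> t" shows "\<bar>bessel_kernel n t\<bar> \<le> exp (2*t)"
proof -
  have "norm (exp (2*t*cos \<theta>) * cos (of_int n * \<theta>)) \<le> exp (2*t)" for \<theta>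
  proof -
    have "exp (2*t*cos \<theta>) * \<bar>cos (of_int n * \<theta>)\<bar> \<le> exp (2*t*cos \<theta>)"
      by (rule mult_left_le) auto
    also have "\<dots> \<le> exp (2*t)"
      using assms by (simp add: mult_left_le)
    finally show ?thesis by (simp add: abs_mult)
  qed
  then have "norm (integral (cbox 0 pi) (\<lambda>\<theta>. exp (2*t*cos \<theta>) * cos (of_int n * \<theta>)))
      \<le> exp (2*t) * Henstock_Kurzweil_Integration.content (cbox 0 pi)"
    by (intro has_integral_bound[OF _ integrable_integral])
       (auto intro!: integrable_continuous_interval continuous_intros)
  then show ?thesis
    by (simp add: bessel_kernel_def abs_mult divide_le_eq mult.commute)
qed

text \<open>
  Integrating the cooperativity inequality \<open>m\<close> times improves the lower bound \<open>-K\<close> to the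
  Taylor term \<open>-K (ct)\<^sup>m / m!\<close>, which tends to \<open>0\<close>.
\<close>

lemma cooperative_system_lower_bound:
  fixes f d :: "real \<Rightarrow> 'a \<Rightarrow> real"
  assumes "0 \<le> c" "0 \<le> K"
    and init: "\<And>i. 0 \<le> f 0 i"
    and lower: "\<And>i t. 0 \<le> t \<Longrightarrow> t \<le> T \<Longrightarrow> -K \<le> f t i"
    and cont: "\<And>i. continuous_on {0..T} (\<lambda>t. f t i)"
    and deriv: "\<And>i t. 0 < t \<Longrightarrow> t < T \<Longrightarrow> ((\<lambda>s. f s i) has_real_derivative d t i) (at t)"
    and coop: "\<And>t i b. 0 < t \<Longrightarrow> t < T \<Longrightarrow> 0 \<le> b \<Longrightarrow> (\<And>j. -b \<le> f t j) \<Longrightarrow> -c*b \<le> d t i"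
    and "0 \<le> t" "t \<le> T"
  shows "-K * (c*t)^m / fact m \<le> f t i"
  using \<open>0 \<le> t\<close> \<open>t \<le> T\<close>
proof (induction m arbitrary: i t)
  case 0
  then show ?case using lower by simp
next
  case (Suc m)
  define h where "h = (\<lambda>s. f s i + K * (c * s) ^ Suc m / fact (Suc m))"
  have "h 0 \<le> h t"
  proof (rule DERIV_nonneg_imp_increasing_open[OF \<open>0 \<le> t\<close>])
    fix s assume s: "0 < s" "s < t"
    have "(h has_real_derivative d s i + K * c * (c * s)^m / fact m) (at s)"
      unfolding h_def using s Suc.prems
      by (intro derivative_eq_intros refl) (auto intro: deriv)
    moreover have "-c * (K * (c * s)^m / fact m) \<le> d s i"
      using s Suc.prems Suc.IH assms(1,2) by (intro coop) auto
    ultimately show "\<exists>y. (h has_real_derivative y) (at s) \<and> 0 \<le> y"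
      by (auto simp: algebra_simps)
  next
    show "continuous_on {0..t} h"
      unfolding h_def using Suc.prems
      by (intro continuous_intros continuous_on_subset[OF cont]) auto
  qed
  then show ?case
    using init[of i] by (simp add: h_def)
qed

lemma cooperative_system_nonneg:
  fixes f d :: "real \<Rightarrow> 'a \<Rightarrow> real"
  assumes "0 \<le> c" "0 \<le> K"
    and "\<And>i. 0 \<le> f 0 i"
    and "\<And>i t. 0 \<le> t \<Longrightarrow> t \<le> T \<Longrightarrow> -K \<le> f t i"
    and "\<And>i. continuous_on {0..T} (\<lambda>t. f t i)"
    and "\<And>i t. 0 < t \<Longrightarrow> t < T \<Longrightarrow> ((\<lambda>s. f s i) has_real_derivative d t i) (at t)"
    and "\<And>t i b. 0 < t \<Longrightarrow> t < T \<Longrightarrow> 0 \<le> b \<Longrightarrow> (\<And>j. -b \<le> f t j) \<Longrightarrow> -c*b \<le> d t i"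
    and "0 \<le> t" "t \<le> T"
  shows "0 \<le> f t i"
proof (rule LIMSEQ_le_const2)
  show "(\<lambda>m. -K * (c*t)^m / fact m) \<longlonglongrightarrow> 0"
    using tendsto_mult_right_zero[OF summable_LIMSEQ_zero[OF summable_exp[of "c*t"]], of "-K"]
    by (simp add: field_simps)
  show "\<exists>N. \<forall>m\<ge>N. -K * (c*t)^m / fact m \<le> f t i"
    using cooperative_system_lower_bound[of c K f T d, OF assms] by blast
qed

text \<open>
  The factor \<open>e\<^sup>t\<close> makes the system for the differences cooperative at the reflection point
  \<open>n = 0\<close>, where \<open>G (-1) = G 1\<close> gives \<open>\<partial>\<^sub>t(G 0 - G 1) = G 1 - G 2 - (G 0 - G 1)\<close>.
\<close>

lemma bessel_kernel_Suc_le: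
  assumes "0 \<le> t"
  shows "bessel_kernel (int n + 1) t \<le> bessel_kernel (int n) t"
proof -
  define f where "f s m = exp s * (bessel_kernel (int m) s - bessel_kernel (int m + 1) s)" for s m
  define d where "d s m = (if m = 0 then f s 1 else f s (m-1) + f s m + f s (m+1))" for s m
  have deriv: "((\<lambda>s. f s m) has_real_derivative d s m) (at s)" for s m
  proof -
    have "((\<lambda>s. f s m) has_real_derivative f s m + exp s *
        (bessel_kernel (int m - 1) s + bessel_kernel (int m + 1) s
         - (bessel_kernel (int m) s + bessel_kernel (int m + 2) s))) (at s)"
      unfolding f_def
      by (auto intro!: derivative_eq_intros bessel_kernel_has_real_derivative
          simp: algebra_simps)
    moreover have "f s m + exp s *
        (bessel_kernel (int m - 1) s + bessel_kernel (int m + 1) s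
         - (bessel_kernel (int m) s + bessel_kernel (int m + 2) s)) = d s m"
      using bessel_kernel_minus[of 1 s]
      by (cases m) (auto simp: f_def d_def algebra_simps)
    ultimately show ?thesis by simp
  qed
  have "0 \<le> f t n"
  proof (rule cooperative_system_nonneg[where f=f and d=d and c=3 and K="2 * exp (3 * (t+1))" and T="t+1"])
    show "0 \<le> f 0 m" for m
      by (simp add: f_def bessel_kernel_at_0)
  next
    fix m and s :: real assume s: "0 \<le> s" "s \<le> t+1"
    have "\<bar>f s m\<bar> \<le> exp s * (2 * exp (2 * s))"
      using abs_bessel_kernel_le[OF s(1), of "int m"] abs_bessel_kernel_le[OF s(1), of "int m + 1"]
      by (auto simp: f_def abs_mult intro!: mult_left_mono)
    also have "\<dots> \<le> 2 * exp (3 * (t+1))"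
      using s by (simp flip: exp_add)
    finally show "- (2 * exp (3 * (t+1))) \<le> f s m" by linarith
  next
    show "continuous_on {0..t+1} (\<lambda>s. f s m)" for m
      unfolding f_def by (intro continuous_intros continuous_on_compose2[OF continuous_on_bessel_kernel]) auto
  next
    fix s :: real and m b assume b: "0 \<le> b" and lower: "\<And>j. -b \<le> f s j"
    show "-3 * b \<le> d s m"
      using b lower[of "m-1"] lower[of m] lower[of "m+1"] lower[of 1] by (auto simp: d_def)
  qed (use assms deriv in auto)
  then show ?thesis
    by (simp add: f_def zero_le_mult_iff)
qed

lemma bessel_kernel_antimono:
  assumes "0 \<le> t" "m \<le> n"
  shows "bessel_kernel (int n) t \<le> bessel_kernel (int m) t"
proof -
  have "decseq (\<lambda>n. bessel_kernel (int n) t)"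
    using bessel_kernel_Suc_le[OF assms(1)] by (intro decseq_SucI) (simp add: add.commute)
  then show ?thesis
    using assms(2) by (simp add: decseq_def)
qed

lemma bessel_kernel_le_of_abs_le:
  assumes "0 \<le> t" "\<bar>l\<bar> \<le> int N"
  shows "bessel_kernel (int N) t \<le> bessel_kernel l t"
proof -
  have "bessel_kernel l t = bessel_kernel (int (nat \<bar>l\<bar>)) t"
    using bessel_kernel_minus[of l t] by (cases "0 \<le> l") (simp_all del: bessel_kernel_minus)
  with bessel_kernel_antimono[OF assms(1), of "nat \<bar>l\<bar>" N] assms(2) show ?thesis
    by simp
qed

lemma is_solution_continuous_on:
  assumes "is_solution u u0"
  shows "continuous_on {0..} (\<lambda>t. u t k)"
  unfolding continuous_on_iff
proof (intro ballI allI impI)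
  fix t0 e :: real assume "t0 \<in> {0..}" "0 < e"
  with assms obtain \<delta> where "0 < \<delta>" and \<delta>: "\<forall>t\<ge>0. \<bar>t - t0\<bar> < \<delta> \<longrightarrow> (\<forall>k. \<bar>u t k - u t0 k\<bar> \<le> e/2)"
    unfolding is_solution_def by (metis atLeast_iff half_gt_zero)
  have "dist (u t k) (u t0 k) < e" if "t \<in> {0..}" "dist t t0 < \<delta>" for t
  proof -
    have "\<bar>u t k - u t0 k\<bar> \<le> e/2"
      using \<delta> that by (simp add: dist_real_def)
    with \<open>0 < e\<close> show ?thesis by (simp add: dist_real_def)
  qed
  with \<open>0 < \<delta>\<close> show "\<exists>\<delta>>0. \<forall>t\<in>{0..}. dist t t0 < \<delta> \<longrightarrow> dist (u t k) (u t0 k) < e"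
    by blast
qed

text \<open>
  The factor \<open>e\<^sup>2\<^sup>t\<close> removes the diagonal term of \<open>\<Delta>\<close>: both \<open>e\<^sup>2\<^sup>t u\<close> and the superposition
  of kernels solve the cooperative system \<open>\<partial>\<^sub>t w(j) = w(j-1) + w(j+1)\<close>.
\<close>

lemma solution_ge_bessel_superposition:
  assumes sol: "is_solution u u0" and "finite A" and "0 \<le> t"
  shows "(\<Sum>m\<in>A. u0 m * bessel_kernel (j - m) t) \<le> exp (2*t) * u t j"
proof -
  have u_nonneg: "0 \<le> u s i" if "0 \<le> s" for s i
    using sol that by (simp add: is_solution_def linf_pos_def)
  have u0_nonneg: "0 \<le> u0 i" for i
    using sol u_nonneg[of 0 i] by (simp add: is_solution_def)
  have u_deriv: "((\<lambda>s. u s i) has_real_derivative disc_lap (u s) i) (at s)" if "0 < s" for s i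
    using sol that by (simp add: is_solution_def)
  define w where "w s i = (\<Sum>m\<in>A. u0 m * bessel_kernel (i - m) s)" for s i
  define f where "f s i = exp (2 * s) * u s i - w s i" for s i
  have w_deriv: "((\<lambda>s. w s i) has_real_derivative w s (i-1) + w s (i+1)) (at s)" for s i
  proof -
    have "((\<lambda>s. w s i) has_real_derivative
        (\<Sum>m\<in>A. u0 m * (bessel_kernel (i - m - 1) s + bessel_kernel (i - m + 1) s))) (at s)"
      unfolding w_def by (intro DERIV_sum DERIV_cmult bessel_kernel_has_real_derivative)
    then show ?thesis
      by (simp add: w_def algebra_simps sum.distrib)
  qed
  have "0 \<le> f t j"
  proof (rule cooperative_system_nonneg[where f=f and c=2 and T="t+1"
        and K="exp (2*(t+1)) * (\<Sum>m\<in>A. u0 m)" and d="\<lambda>s i. f s (i-1) + f s (i+1)"])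
    fix i
    have "w 0 i = (\<Sum>m\<in>A. if m = i then u0 i else 0)"
      unfolding w_def by (rule sum.cong) (auto simp: bessel_kernel_at_0)
    also have "\<dots> \<le> u0 i"
      using \<open>finite A\<close> u0_nonneg by simp
    finally show "0 \<le> f 0 i"
      using sol by (simp add: f_def is_solution_def)
  next
    fix i and s :: real assume s: "0 \<le> s" "s \<le> t+1"
    have "w s i \<le> (\<Sum>m\<in>A. u0 m * exp (2*(t+1)))"
      unfolding w_def
    proof (intro sum_mono mult_left_mono u0_nonneg)
      fix m
      have "bessel_kernel (i - m) s \<le> exp (2 * s)"
        using abs_bessel_kernel_le[OF s(1)] by (simp add: abs_le_iff)
      also have "\<dots> \<le> exp (2*(t+1))"
        using s by simp
      finally show "bessel_kernel (i - m) s \<le> exp (2*(t+1))" .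
    qed
    moreover have "0 \<le> exp (2 * s) * u s i"
      using u_nonneg[OF s(1)] by simp
    ultimately show "- (exp (2*(t+1)) * (\<Sum>m\<in>A. u0 m)) \<le> f s i"
      by (simp add: f_def sum_distrib_right mult.commute)
  next
    fix i
    have "continuous_on {0..t+1} (\<lambda>s. u s i)"
      using is_solution_continuous_on[OF sol] by (rule continuous_on_subset) auto
    then show "continuous_on {0..t+1} (\<lambda>s. f s i)"
      unfolding f_def w_def
      by (intro continuous_intros continuous_on_bessel_kernel)
  next
    fix i and s :: real assume "0 < s"
    have "((\<lambda>s. f s i) has_real_derivative
        exp (2 * s) * 2 * u s i + disc_lap (u s) i * exp (2 * s) - (w s (i-1) + w s (i+1))) (at s)"
      unfolding f_def
      by (auto intro!: derivative_eq_intros u_deriv[OF \<open>0 < s\<close>] w_deriv)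
    then show "((\<lambda>s. f s i) has_real_derivative f s (i-1) + f s (i+1)) (at s)"
      by (simp add: f_def disc_lap_def algebra_simps)
  next
    fix s :: real and i b assume lower: "\<And>k. -b \<le> f s k"
    show "-2 * b \<le> f s (i-1) + f s (i+1)"
      using lower[of "i-1"] lower[of "i+1"] by linarith
  qed (use \<open>0 \<le> t\<close> u0_nonneg in \<open>auto intro!: sum_nonneg mult_nonneg_nonneg\<close>)
  then show ?thesis
    by (simp add: f_def w_def)
qed

theorem lemmaA14:
  fixes u :: "real \<Rightarrow> int \<Rightarrow> real" and u0 :: "int \<Rightarrow> real"
  assumes "u0 \<in> linf_pos" and "is_solution u u0"
  shows "\<forall>k N t. t \<ge> 0 \<longrightarrow> u t k \<ge> M_sum u0 k N * exp (-2 * t) * besselI N (2 * t)"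
proof (intro allI impI)
  fix k :: int and N :: nat and t :: real
  assume "0 \<le> t"
  let ?L = "{-int N..int N}"
  have "M_sum u0 k N * bessel_kernel (int N) t = (\<Sum>l\<in>?L. u0 (k - l) * bessel_kernel (int N) t)"
    by (simp add: M_sum_def sum_distrib_right)
  also have "\<dots> \<le> (\<Sum>l\<in>?L. u0 (k - l) * bessel_kernel l t)"
    using assms(1) \<open>0 \<le> t\<close>
    by (intro sum_mono mult_left_mono bessel_kernel_le_of_abs_le) (auto simp: linf_pos_def)
  also have "\<dots> = (\<Sum>m\<in>(\<lambda>l. k - l) ` ?L. u0 m * bessel_kernel (k - m) t)"
    by (subst sum.reindex) (auto simp: inj_on_def)
  also have "\<dots> \<le> exp (2*t) * u t k"
    using assms(2) \<open>0 \<le> t\<close> by (intro solution_ge_bessel_superposition) auto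
  finally have "exp (-2*t) * (M_sum u0 k N * bessel_kernel (int N) t) \<le> exp (-2*t) * (exp (2*t) * u t k)"
    by (intro mult_left_mono) auto
  then show "M_sum u0 k N * exp (-2 * t) * besselI N (2 * t) \<le> u t k"
    unfolding besselI_eq_bessel_kernel by (simp add: mult_ac flip: exp_add)
qed

end
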